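(* Let $\theta_1,\theta_2\in\Theta_k$ and let $K\ge 4k$ be an integer. Then $\|\mathcal{M}_{\theta_1}-\mathcal{M}_{\theta_2}\|_{\mathcal{A}_K}=\|\mathcal{M}_{\theta_1}-\mathcal{M}_{\theta_2}\|_1$.
   Context: $\Theta_k=\{(w,\mu,\tau): w\in\mathbb{R}^k, w_i\ge0,\sum_i w_i=1,\ \mu\in\mathbb{R}^k,\ \tau\in\mathbb{R}_{>0}^k\}$; for $\theta=(w,\mu,\tau)\in\Theta_k$, $\mathcal{M}_\theta(x)=\sum_{i=1}^k w_i\frac{\tau_i}{\sqrt{2\pi}}e^{-\tau_i^2(x-\mu_i)^2/2}$. $\|g\|_1=\int|g|$. For $\mathfrak{I}_K$ the family of all sets of $K$ disjoint intervals in $\mathbb{R}$, $\|g\|_{\mathcal{A}_K}=\sup_{\mathcal{I}\in\mathfrak{I}_K}\sum_{I\in\mathcal{I}}\left|\int_I g(x)\,dx\right|$. *)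

theory Defs
  imports "HOL-Analysis.Analysis"
begin

text \<open>A parameter theta = (w, mu, tau) of a k-component Gaussian mixture; the
  components are indexed by i < k (values at i >= k are irrelevant).\<close>
type_synonym param = "(nat \<Rightarrow> real) \<times> (nat \<Rightarrow> real) \<times> (nat \<Rightarrow> real)"

definition Theta :: "nat \<Rightarrow> param set" where
  "Theta k = {(w, mu, tau). (\<forall>i<k. w i \<ge> 0) \<and> (\<Sum>i<k. w i) = 1 \<and> (\<forall>i<k. tau i > 0)}"

definition mixture :: "nat \<Rightarrow> param \<Rightarrow> real \<Rightarrow> real" where
  "mixture k \<theta> x = (case \<theta> of (w, mu, tau) \<Rightarrow>
     (\<Sum>i<k. w i * (tau i / sqrt (2 * pi)) * exp (- ((tau i)\<^sup>2 * (x - mu i)\<^sup>2) / 2)))"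

definition L1_norm :: "(real \<Rightarrow> real) \<Rightarrow> real" where
  "L1_norm g = (LINT x|lborel. \<bar>g x\<bar>)"

definition interval_families :: "nat \<Rightarrow> real set set set" where
  "interval_families K = {\<I>. finite \<I> \<and> card \<I> = K \<and> (\<forall>I\<in>\<I>. is_interval I)
      \<and> (\<forall>I\<in>\<I>. \<forall>J\<in>\<I>. I \<noteq> J \<longrightarrow> I \<inter> J = {})}"

definition AK_norm :: "nat \<Rightarrow> (real \<Rightarrow> real) \<Rightarrow> real" where
  "AK_norm K g = (SUP \<I>\<in>interval_families K. \<Sum>I\<in>\<I>. \<bar>LINT x:I|lborel. g x\<bar>)"

end

theory Submission
  imports Defs "HOL-Probability.Distributions"
begin

text \<open>The difference of two \<open>k\<close>-component mixtures is a combination of \<open>2 * k\<close> Gaussians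
  \<open>exp (- al * x\<^sup>2 + b * x)\<close> with \<open>al > 0\<close>, and a combination of \<open>n\<close> such Gaussians that does
  not vanish identically has at most \<open>2 * n - 2\<close> zeros. To see this, factor out the sharpest
  Gaussian \<open>exp (- A * x\<^sup>2)\<close> and substitute \<open>t = 2 * A * x\<close>: the flatter terms become the bilateral
  Laplace transform of a combination of fewer Gaussians, the sharpest ones an exponential sum. A
  Rolle-type induction bounds the zeros of such a transform plus exponential sum by the number of
  sign changes of the transformed function plus twice the number of exponentials.

  Hence the difference \<open>g\<close> has at most \<open>4 * k - 2 < K\<close> zeros. Cutting the line at them gives
  \<open>K\<close> disjoint intervals on each of which \<open>g\<close> has constant sign; on this family the sum defining
  the \<open>A_K\<close> norm equals \<open>\<integral> \<bar>g\<bar>\<close>, which by the triangle inequality bounds the sum for every family.\<close>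

lemma abs_le_exp_abs: "\<bar>y::real\<bar> \<le> exp \<bar>y\<bar>"
  using exp_ge_add_one_self[of "\<bar>y\<bar>"] by linarith

lemma exp_mult_le_exp_abs_mult: "exp (t * y) \<le> exp (\<bar>t\<bar> * \<bar>y\<bar>)" for t y :: real
  by (metis abs_ge_self abs_mult exp_le_cancel_iff)

lemma abs_exp_minus_one_le: "\<bar>exp u - 1\<bar> \<le> \<bar>u\<bar> * exp \<bar>u\<bar>" for u :: real
proof (cases "u \<ge> 0")
  case True
  have "exp u * (1 - u) \<le> exp u * exp (-u)"
    using exp_ge_add_one_self[of "-u"] by (intro mult_left_mono) auto
  then show ?thesis using True by (simp add: exp_minus field_simps)
next
  case False
  then have "\<bar>exp u - 1\<bar> = 1 - exp u"
    by simp
  moreover have "1 - exp u \<le> - u"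
    using exp_ge_add_one_self[of u] by linarith
  moreover have "- u \<le> \<bar>u\<bar> * exp \<bar>u\<bar>"
    using mult_left_mono[of 1 "exp \<bar>u\<bar>" "\<bar>u\<bar>"] by simp
  ultimately show ?thesis
    by linarith
qed

lemma abs_exp_difference_quotient_le:
  fixes d y :: real
  assumes "\<bar>d\<bar> \<le> 1" "d \<noteq> 0"
  shows "\<bar>(exp (d * y) - 1) / d\<bar> \<le> exp (2 * \<bar>y\<bar>)"
proof -
  have "\<bar>exp (d * y) - 1\<bar> \<le> \<bar>d\<bar> * (\<bar>y\<bar> * exp \<bar>d * y\<bar>)"
    using abs_exp_minus_one_le[of "d * y"] by (simp add: abs_mult mult.assoc)
  also have "\<dots> \<le> \<bar>d\<bar> * (exp \<bar>y\<bar> * exp \<bar>y\<bar>)"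
    using assms(1) abs_le_exp_abs[of y]
    by (intro mult_left_mono mult_mono) (auto simp: abs_mult mult_left_le_one_le)
  also have "exp \<bar>y\<bar> * exp \<bar>y\<bar> = exp (2 * \<bar>y\<bar>)"
    by (simp flip: exp_add)
  finally show ?thesis
    using assms(2) by (simp add: abs_divide pos_divide_le_eq mult.commute)
qed

lemma exp_difference_quotient_tendsto: "((\<lambda>d. (exp (d * y) - 1) / d) \<longlongrightarrow> y) (at 0)"
  for y :: real
proof -
  have "((\<lambda>d. exp (d * y)) has_real_derivative exp (0 * y) * y) (at 0)"
    by (auto intro!: derivative_eq_intros)
  then show ?thesis
    unfolding DERIV_def by simp
qed

section \<open>Exponentially integrable functions and their bilateral Laplace transform\<close>

definition exp_integrable :: "(real \<Rightarrow> real) \<Rightarrow> bool" where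
  "exp_integrable h \<longleftrightarrow> h \<in> borel_measurable borel
     \<and> (\<forall>a. integrable lborel (\<lambda>y. \<bar>h y\<bar> * exp (a * \<bar>y\<bar>)))"

definition bilateral_laplace :: "(real \<Rightarrow> real) \<Rightarrow> real \<Rightarrow> real" where
  "bilateral_laplace h t = (\<integral>y. h y * exp (t * y) \<partial>lborel)"

lemma exp_integrableD:
  assumes "exp_integrable h"
  shows "h \<in> borel_measurable borel" "integrable lborel (\<lambda>y. \<bar>h y\<bar> * exp (a * \<bar>y\<bar>))"
  using assms unfolding exp_integrable_def by auto

lemma exp_integrableI_bound:
  assumes "g \<in> borel_measurable borel"
    and "\<And>a. \<exists>f. integrable lborel f \<and> (\<forall>y. \<bar>g y\<bar> * exp (a * \<bar>y\<bar>) \<le> f y)"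
  shows "exp_integrable g"
  unfolding exp_integrable_def
proof (intro conjI allI assms(1))
  fix a
  obtain f where f: "integrable lborel f" "\<And>y. \<bar>g y\<bar> * exp (a * \<bar>y\<bar>) \<le> f y"
    using assms(2) by blast
  show "integrable lborel (\<lambda>y. \<bar>g y\<bar> * exp (a * \<bar>y\<bar>))"
    by (rule Bochner_Integration.integrable_bound[OF f(1)])
       (use assms(1) f(2) in \<open>auto intro!: AE_I2 order_trans[OF _ abs_ge_self]\<close>)
qed

lemma integrable_bilateral_laplace:
  assumes "exp_integrable h"
  shows "integrable lborel (\<lambda>y. h y * exp (t * y))"
proof (rule Bochner_Integration.integrable_bound)
  show "integrable lborel (\<lambda>y. \<bar>h y\<bar> * exp (\<bar>t\<bar> * \<bar>y\<bar>))"
    using exp_integrableD[OF assms] by blast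
  show "AE y in lborel. norm (h y * exp (t * y)) \<le> norm (\<bar>h y\<bar> * exp (\<bar>t\<bar> * \<bar>y\<bar>))"
    using exp_mult_le_exp_abs_mult by (auto simp: abs_mult intro!: mult_left_mono)
qed (use exp_integrableD[OF assms] in auto)

lemma exp_integrable_zero: "exp_integrable (\<lambda>y. 0)"
  unfolding exp_integrable_def by simp

lemma exp_integrable_uminus: "exp_integrable h \<Longrightarrow> exp_integrable (\<lambda>y. - h y)"
  unfolding exp_integrable_def by simp

lemma exp_integrable_add:
  assumes "exp_integrable f" "exp_integrable g"
  shows "exp_integrable (\<lambda>y. f y + g y)"
proof (rule exp_integrableI_bound)
  fix a
  have "\<bar>f y + g y\<bar> * exp (a * \<bar>y\<bar>) \<le> (\<bar>f y\<bar> + \<bar>g y\<bar>) * exp (a * \<bar>y\<bar>)" for y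
    by (intro mult_right_mono abs_triangle_ineq) simp
  then have "\<bar>f y + g y\<bar> * exp (a * \<bar>y\<bar>) \<le> \<bar>f y\<bar> * exp (a * \<bar>y\<bar>) + \<bar>g y\<bar> * exp (a * \<bar>y\<bar>)" for y
    by (simp only: distrib_right)
  then show "\<exists>F. integrable lborel F \<and> (\<forall>y. \<bar>f y + g y\<bar> * exp (a * \<bar>y\<bar>) \<le> F y)"
    using exp_integrableD[OF assms(1)] exp_integrableD[OF assms(2)] by blast
qed (use exp_integrableD[OF assms(1)] exp_integrableD[OF assms(2)] in auto)

lemma exp_integrable_sum:
  "finite J \<Longrightarrow> (\<And>i. i \<in> J \<Longrightarrow> exp_integrable (g i)) \<Longrightarrow> exp_integrable (\<lambda>y. \<Sum>i\<in>J. g i y)"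
  by (induction J rule: finite_induct) (auto intro: exp_integrable_zero exp_integrable_add)

lemma exp_integrable_linear_mult:
  assumes "exp_integrable h"
  shows "exp_integrable (\<lambda>y. (y - c) * h y)"
proof (rule exp_integrableI_bound)
  fix a
  have "\<bar>(y - c) * h y\<bar> * exp (a * \<bar>y\<bar>) \<le> (1 + \<bar>c\<bar>) * (\<bar>h y\<bar> * exp ((\<bar>a\<bar> + 1) * \<bar>y\<bar>))" for y
  proof -
    have "\<bar>y - c\<bar> \<le> (1 + \<bar>c\<bar>) * exp \<bar>y\<bar>"
      using abs_le_exp_abs[of y] mult_left_mono[of 1 "exp \<bar>y\<bar>" "\<bar>c\<bar>"] by (simp add: algebra_simps)
    moreover have "exp (a * \<bar>y\<bar>) \<le> exp (\<bar>a\<bar> * \<bar>y\<bar>)"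
      by (simp add: mult_right_mono)
    ultimately have "\<bar>y - c\<bar> * (\<bar>h y\<bar> * exp (a * \<bar>y\<bar>)) \<le> ((1 + \<bar>c\<bar>) * exp \<bar>y\<bar>) * (\<bar>h y\<bar> * exp (\<bar>a\<bar> * \<bar>y\<bar>))"
      by (intro mult_mono mult_left_mono) auto
    also have "\<dots> = (1 + \<bar>c\<bar>) * (\<bar>h y\<bar> * (exp \<bar>y\<bar> * exp (\<bar>a\<bar> * \<bar>y\<bar>)))"
      by (simp only: mult_ac)
    also have "exp \<bar>y\<bar> * exp (\<bar>a\<bar> * \<bar>y\<bar>) = exp ((\<bar>a\<bar> + 1) * \<bar>y\<bar>)"
      unfolding exp_add[symmetric] by (simp add: algebra_simps)
    finally show ?thesis
      by (simp only: abs_mult mult.assoc)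
  qed
  then show "\<exists>f. integrable lborel f \<and> (\<forall>y. \<bar>(y - c) * h y\<bar> * exp (a * \<bar>y\<bar>) \<le> f y)"
    using exp_integrableD(2)[OF assms, of "\<bar>a\<bar> + 1"] by blast
qed (use exp_integrableD[OF assms] in auto)

lemma has_bochner_integral_gaussian:
  fixes \<gamma> e :: real
  assumes "0 < \<gamma>"
  shows "has_bochner_integral lborel (\<lambda>y. exp (- \<gamma> * y\<^sup>2 + e * y)) (sqrt (pi / \<gamma>) * exp (e\<^sup>2 / (4 * \<gamma>)))"
proof -
  define \<mu> \<sigma> where "\<mu> = e / (2 * \<gamma>)" and "\<sigma> = sqrt (1 / (2 * \<gamma>))"
  have \<sigma>: "0 < \<sigma>" "2 * \<sigma>\<^sup>2 = 1 / \<gamma>" "sqrt (2 * pi * \<sigma>\<^sup>2) = sqrt (pi / \<gamma>)"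
    unfolding \<sigma>_def using assms by auto
  have "sqrt (pi / \<gamma>) * exp (e\<^sup>2 / (4 * \<gamma>)) * normal_density \<mu> \<sigma> y = exp (- \<gamma> * y\<^sup>2 + e * y)" for y
  proof -
    have "e\<^sup>2 / (4 * \<gamma>) - (y - \<mu>)\<^sup>2 / (2 * \<sigma>\<^sup>2) = - \<gamma> * y\<^sup>2 + e * y"
      unfolding \<sigma>(2) \<mu>_def using assms by (simp add: field_simps power2_eq_square)
    then have "exp (e\<^sup>2 / (4 * \<gamma>)) * exp (- (y - \<mu>)\<^sup>2 / (2 * \<sigma>\<^sup>2)) = exp (- \<gamma> * y\<^sup>2 + e * y)"
      unfolding exp_add[symmetric] by simp
    moreover have "sqrt (pi / \<gamma>) \<noteq> 0"
      using assms by simp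
    ultimately show ?thesis
      unfolding normal_density_def \<sigma>(3) by simp
  qed
  moreover have "has_bochner_integral lborel (normal_density \<mu> \<sigma>) 1"
    using \<sigma>(1) by (simp add: has_bochner_integral_iff integrable_normal_density integral_normal_density)
  ultimately show ?thesis
    using has_bochner_integral_mult_right[of "sqrt (pi / \<gamma>) * exp (e\<^sup>2 / (4 * \<gamma>))"
        lborel "normal_density \<mu> \<sigma>" 1] by simp
qed

lemma exp_integrable_gaussian:
  fixes \<gamma> a d :: real
  assumes "0 < \<gamma>"
  shows "exp_integrable (\<lambda>y. a * exp (- \<gamma> * y\<^sup>2 + d * y))"
proof (rule exp_integrableI_bound)
  fix c
  have "\<bar>a * exp (- \<gamma> * y\<^sup>2 + d * y)\<bar> * exp (c * \<bar>y\<bar>)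
      \<le> \<bar>a\<bar> * (exp (- \<gamma> * y\<^sup>2 + (d + c) * y) + exp (- \<gamma> * y\<^sup>2 + (d - c) * y))" for y
  proof -
    have "exp (c * \<bar>y\<bar>) \<le> exp (c * y) + exp (- (c * y))"
      by (cases "0 \<le> y") (simp_all add: add_increasing add_increasing2)
    then have "exp (- \<gamma> * y\<^sup>2 + d * y) * exp (c * \<bar>y\<bar>)
        \<le> exp (- \<gamma> * y\<^sup>2 + d * y) * exp (c * y) + exp (- \<gamma> * y\<^sup>2 + d * y) * exp (- (c * y))"
      by (simp flip: distrib_left)
    moreover have "exp (- \<gamma> * y\<^sup>2 + d * y) * exp (c * y) = exp (- \<gamma> * y\<^sup>2 + (d + c) * y)"
      and "exp (- \<gamma> * y\<^sup>2 + d * y) * exp (- (c * y)) = exp (- \<gamma> * y\<^sup>2 + (d - c) * y)"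
      unfolding exp_add[symmetric] by (simp_all add: algebra_simps)
    ultimately have "exp (- \<gamma> * y\<^sup>2 + d * y) * exp (c * \<bar>y\<bar>)
        \<le> exp (- \<gamma> * y\<^sup>2 + (d + c) * y) + exp (- \<gamma> * y\<^sup>2 + (d - c) * y)"
      by simp
    then show ?thesis
      by (simp add: abs_mult mult.assoc mult_left_mono)
  qed
  moreover have "integrable lborel (\<lambda>y. \<bar>a\<bar> * (exp (- \<gamma> * y\<^sup>2 + (d + c) * y) + exp (- \<gamma> * y\<^sup>2 + (d - c) * y)))"
    using has_bochner_integral_gaussian[OF assms] by (auto simp: has_bochner_integral_iff)
  ultimately show "\<exists>f. integrable lborel f \<and> (\<forall>y. \<bar>a * exp (- \<gamma> * y\<^sup>2 + d * y)\<bar> * exp (c * \<bar>y\<bar>) \<le> f y)"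
    by blast
qed simp

lemma bilateral_laplace_uminus: "bilateral_laplace (\<lambda>y. - h y) t = - bilateral_laplace h t"
  unfolding bilateral_laplace_def by simp

lemma bilateral_laplace_sum:
  assumes "finite J" "\<And>i. i \<in> J \<Longrightarrow> exp_integrable (g i)"
  shows "bilateral_laplace (\<lambda>y. \<Sum>i\<in>J. g i y) t = (\<Sum>i\<in>J. bilateral_laplace (g i) t)"
  unfolding bilateral_laplace_def sum_distrib_right
  by (rule Bochner_Integration.integral_sum) (use assms integrable_bilateral_laplace in auto)

lemma bilateral_laplace_linear_mult:
  assumes "exp_integrable h"
  shows "bilateral_laplace (\<lambda>y. (y - c) * h y) t
       = bilateral_laplace (\<lambda>y. y * h y) t - c * bilateral_laplace h t"
proof -
  have "integrable lborel (\<lambda>y. y * h y * exp (t * y))"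
    using integrable_bilateral_laplace[OF exp_integrable_linear_mult[OF assms, of 0]] by simp
  moreover have "integrable lborel (\<lambda>y. c * (h y * exp (t * y)))"
    using integrable_bilateral_laplace[OF assms] by simp
  ultimately have "(\<integral>y. y * h y * exp (t * y) - c * (h y * exp (t * y)) \<partial>lborel)
      = (\<integral>y. y * h y * exp (t * y) \<partial>lborel) - (\<integral>y. c * (h y * exp (t * y)) \<partial>lborel)"
    by (rule Bochner_Integration.integral_diff)
  moreover have "(\<lambda>y. (y - c) * h y * exp (t * y)) = (\<lambda>y. y * h y * exp (t * y) - c * (h y * exp (t * y)))"
    by (simp add: algebra_simps)
  ultimately show ?thesis
    unfolding bilateral_laplace_def by simp
qed

lemma bilateral_laplace_gaussian:
  fixes \<gamma> a d :: real
  assumes "0 < \<gamma>"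
  shows "bilateral_laplace (\<lambda>y. a * exp (- \<gamma> * y\<^sup>2 + d * y)) t
       = a * sqrt (pi / \<gamma>) * exp ((d + t)\<^sup>2 / (4 * \<gamma>))"
proof -
  have "bilateral_laplace (\<lambda>y. a * exp (- \<gamma> * y\<^sup>2 + d * y)) t
      = (\<integral>y. a * exp (- \<gamma> * y\<^sup>2 + (d + t) * y) \<partial>lborel)"
    unfolding bilateral_laplace_def mult.assoc exp_add[symmetric] by (simp add: algebra_simps)
  then show ?thesis
    using has_bochner_integral_gaussian[OF assms, of "d + t"] by (simp add: has_bochner_integral_iff)
qed

lemma bilateral_laplace_eq_0_if_nonneg:
  assumes "exp_integrable h" "\<And>y. 0 \<le> h y" "bilateral_laplace h t0 = 0"
  shows "bilateral_laplace h t = 0"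
proof -
  have "AE y in lborel. h y * exp (t0 * y) = 0"
    using assms(2,3) integral_nonneg_eq_0_iff_AE[OF integrable_bilateral_laplace[OF assms(1)]]
    unfolding bilateral_laplace_def by auto
  then have "AE y in lborel. h y * exp (t * y) = 0"
    by eventually_elim auto
  then show ?thesis
    unfolding bilateral_laplace_def by (rule integral_eq_zero_AE)
qed

lemma tendsto_integral_exp_difference_quotient:
  assumes h: "exp_integrable h"
  shows "((\<lambda>d. \<integral>y. h y * exp (t * y) * ((exp (d * y) - 1) / d) \<partial>lborel)
          \<longlongrightarrow> (\<integral>y. y * h y * exp (t * y) \<partial>lborel)) (at 0)"
  unfolding tendsto_at_iff_sequentially comp_def
proof safe
  fix X :: "nat \<Rightarrow> real"
  assume X0: "\<forall>i. X i \<in> UNIV - {0}" and X: "X \<longlonglongrightarrow> 0"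
  define q where "q n y = h y * exp (t * y) * ((exp (X n * y) - 1) / X n)" for n y
  obtain N where N: "\<And>n. N \<le> n \<Longrightarrow> \<bar>X n\<bar> \<le> 1"
    using X[unfolded LIMSEQ_def, rule_format, of 1] by (force simp: dist_real_def)
  have XN: "filterlim (\<lambda>n. X (n + N)) (at 0) sequentially"
    using X0 LIMSEQ_ignore_initial_segment[OF X, of N] by (auto simp: filterlim_at)
  have "(\<lambda>n. \<integral>y. q (n + N) y \<partial>lborel) \<longlonglongrightarrow> (\<integral>y. y * h y * exp (t * y) \<partial>lborel)"
  proof (rule integral_dominated_convergence[where w="\<lambda>y. \<bar>h y\<bar> * exp ((\<bar>t\<bar> + 2) * \<bar>y\<bar>)"])
    show "AE y in lborel. (\<lambda>n. q (n + N) y) \<longlonglongrightarrow> y * h y * exp (t * y)"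
    proof (rule AE_I2)
      fix y
      have "(\<lambda>n. (exp (X (n + N) * y) - 1) / X (n + N)) \<longlonglongrightarrow> y"
        using filterlim_compose[OF exp_difference_quotient_tendsto XN] by simp
      then have "(\<lambda>n. h y * exp (t * y) * ((exp (X (n + N) * y) - 1) / X (n + N)))
          \<longlonglongrightarrow> h y * exp (t * y) * y"
        by (rule tendsto_mult_left)
      then show "(\<lambda>n. q (n + N) y) \<longlonglongrightarrow> y * h y * exp (t * y)"
        unfolding q_def by (simp only: mult_ac)
    qed
    show "AE y in lborel. norm (q (n + N) y) \<le> \<bar>h y\<bar> * exp ((\<bar>t\<bar> + 2) * \<bar>y\<bar>)" for n
    proof (rule AE_I2)
      fix y
      have "\<bar>(exp (X (n + N) * y) - 1) / X (n + N)\<bar> \<le> exp (2 * \<bar>y\<bar>)"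
        using N[of "n + N"] X0 by (intro abs_exp_difference_quotient_le) auto
      then have "\<bar>h y\<bar> * (exp (t * y) * \<bar>(exp (X (n + N) * y) - 1) / X (n + N)\<bar>)
          \<le> \<bar>h y\<bar> * (exp (\<bar>t\<bar> * \<bar>y\<bar>) * exp (2 * \<bar>y\<bar>))"
        using exp_mult_le_exp_abs_mult[of t y] by (intro mult_left_mono mult_mono) auto
      also have "exp (\<bar>t\<bar> * \<bar>y\<bar>) * exp (2 * \<bar>y\<bar>) = exp ((\<bar>t\<bar> + 2) * \<bar>y\<bar>)"
        unfolding exp_add[symmetric] by (simp add: algebra_simps)
      finally show "norm (q (n + N) y) \<le> \<bar>h y\<bar> * exp ((\<bar>t\<bar> + 2) * \<bar>y\<bar>)"
        unfolding q_def by (simp only: real_norm_def abs_mult abs_exp_cancel mult.assoc)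
    qed
  qed (use exp_integrableD[OF h] in \<open>auto simp: q_def\<close>)
  then show "(\<lambda>n. \<integral>y. h y * exp (t * y) * ((exp (X n * y) - 1) / X n) \<partial>lborel)
      \<longlonglongrightarrow> (\<integral>y. y * h y * exp (t * y) \<partial>lborel)"
    unfolding q_def by (rule LIMSEQ_offset)
qed

lemma bilateral_laplace_has_real_derivative:
  assumes h: "exp_integrable h"
  shows "(bilateral_laplace h has_real_derivative bilateral_laplace (\<lambda>y. y * h y) t) (at t)"
proof -
  have quotient: "(bilateral_laplace h (t + d) - bilateral_laplace h t) / d
      = (\<integral>y. h y * exp (t * y) * ((exp (d * y) - 1) / d) \<partial>lborel)" for d
  proof -
    have "bilateral_laplace h (t + d) - bilateral_laplace h t
        = (\<integral>y. h y * exp ((t + d) * y) - h y * exp (t * y) \<partial>lborel)"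
      unfolding bilateral_laplace_def
      using integrable_bilateral_laplace[OF h, of "t + d"] integrable_bilateral_laplace[OF h, of t]
      by (rule Bochner_Integration.integral_diff[symmetric])
    also have "\<dots> = (\<integral>y. h y * exp (t * y) * (exp (d * y) - 1) \<partial>lborel)"
      by (intro Bochner_Integration.integral_cong) (auto simp: algebra_simps exp_add)
    finally show ?thesis
      by (simp only: times_divide_eq_right integral_divide_zero)
  qed
  show ?thesis
    unfolding DERIV_def quotient bilateral_laplace_def[of "\<lambda>y. y * h y"]
    by (rule tendsto_integral_exp_difference_quotient[OF h])
qed

section \<open>Counting zeros with Rolle's theorem\<close>

definition zeros_bounded :: "(real \<Rightarrow> real) \<Rightarrow> nat \<Rightarrow> bool" where
  "zeros_bounded F r \<longleftrightarrow> (\<forall>t. F t = 0) \<or> (finite {t. F t = 0} \<and> card {t. F t = 0} \<le> r)"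

lemma zeros_bounded_mono: "zeros_bounded F r \<Longrightarrow> r \<le> s \<Longrightarrow> zeros_bounded F s"
  unfolding zeros_bounded_def by auto

lemma zeros_bounded_cong_zeros:
  assumes "{t. G t = 0} = {t. F t = 0}"
  shows "zeros_bounded G r \<longleftrightarrow> zeros_bounded F r"
proof -
  have "(\<forall>t. G t = 0) \<longleftrightarrow> (\<forall>t. F t = 0)"
    using assms by (metis (mono_tags) UNIV_I mem_Collect_eq)
  then show ?thesis
    unfolding zeros_bounded_def assms by simp
qed

lemma zeros_bounded_compose_scale:
  assumes "zeros_bounded L r" "k \<noteq> 0"
  shows "zeros_bounded (\<lambda>x. L (k * x)) r"
proof -
  have "{x. L (k * x) = 0} = (\<lambda>t. t / k) ` {t. L t = 0}"
    using assms(2) by (auto simp: image_iff) (metis nonzero_mult_div_cancel_left)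
  moreover have "inj_on (\<lambda>t. t / k) {t. L t = 0}"
    using assms(2) by (auto simp: inj_on_def)
  ultimately show ?thesis
    using assms(1) unfolding zeros_bounded_def by (auto simp: card_image)
qed

lemma deriv_zero_between_zeros:
  fixes M M' :: "real \<Rightarrow> real"
  assumes "\<And>t. (M has_real_derivative M' t) (at t)" and "a < b" "M a = 0" "M b = 0"
  shows "\<exists>z. a < z \<and> z < b \<and> M' z = 0"
proof -
  have "continuous_on {a..b} M"
    using assms(1) by (meson DERIV_continuous continuous_at_imp_continuous_on)
  moreover have "\<And>x. M differentiable (at x)"
    using assms(1) real_differentiable_def by blast
  ultimately obtain z where "a < z" "z < b" "DERIV M z :> 0"
    using Rolle[of a b M] assms(2-4) by auto
  then show ?thesis
    using DERIV_unique[OF assms(1)[of z]] by auto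
qed

lemma card_zeros_le_Suc_card_zeros_deriv:
  fixes M M' :: "real \<Rightarrow> real"
  assumes D: "\<And>t. (M has_real_derivative M' t) (at t)"
    and fin: "finite {t. M' t = 0}" and S: "finite S" "S \<subseteq> {t. M t = 0}"
  shows "card S \<le> Suc (card {t. M' t = 0})"
proof (cases "S = {}")
  case False
  define xs where "xs = sorted_list_of_set S"
  have xs: "set xs = S" "length xs = card S" "sorted_wrt (<) xs"
    using S by (auto simp: xs_def strict_sorted_list_of_set)
  obtain N where N: "card S = Suc N"
    using False S by (metis card_0_eq not0_implies_Suc)
  have "\<exists>z. xs ! i < z \<and> z < xs ! Suc i \<and> M' z = 0" if "i < N" for i
  proof (rule deriv_zero_between_zeros[OF D])
    show "xs ! i < xs ! Suc i"
      using xs that N by (intro sorted_wrt_nth_less[OF xs(3)]) auto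
    have "i < length xs" "Suc i < length xs"
      using xs that N by auto
    then have "xs ! i \<in> S" "xs ! Suc i \<in> S"
      using xs(1) nth_mem by blast+
    then show "M (xs ! i) = 0" "M (xs ! Suc i) = 0"
      using S by auto
  qed
  then obtain \<xi> where \<xi>: "\<And>i. i < N \<Longrightarrow> xs ! i < \<xi> i \<and> \<xi> i < xs ! Suc i \<and> M' (\<xi> i) = 0"
    by metis
  have mono: "\<xi> i < \<xi> j" if "i < j" "j < N" for i j
  proof -
    have "xs ! Suc i \<le> xs ! j"
      using xs that N sorted_wrt_nth_less[OF xs(3), of "Suc i" j]
      by (cases "Suc i = j") auto
    then show ?thesis
      using \<xi>[of i] \<xi>[of j] that by force
  qed
  then have "inj_on \<xi> {..<N}"
    by (intro inj_onI) (metis lessThan_iff linorder_neqE_nat order_less_irrefl)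
  moreover have "card (\<xi> ` {..<N}) \<le> card {t. M' t = 0}"
    using \<xi> by (intro card_mono[OF fin]) auto
  ultimately show ?thesis
    using N by (simp add: card_image)
qed simp

lemma zeros_bounded_Suc_if_deriv:
  fixes M M' :: "real \<Rightarrow> real"
  assumes D: "\<And>t. (M has_real_derivative M' t) (at t)" and "zeros_bounded M' r"
  shows "zeros_bounded M (Suc r)"
proof (cases "\<forall>t. M' t = 0")
  case True
  then have "M x = M y" for x y
    using D by (metis DERIV_isconst_all)
  then have "(\<forall>t. M t = 0) \<or> {t. M t = 0} = {}"
    by (metis (mono_tags) Collect_empty_eq)
  then show ?thesis
    unfolding zeros_bounded_def by auto
next
  case False
  then have fin: "finite {t. M' t = 0}" and card: "card {t. M' t = 0} \<le> r"
    using assms(2) unfolding zeros_bounded_def by auto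
  have "finite {t. M t = 0}"
  proof (rule ccontr)
    assume "infinite {t. M t = 0}"
    then obtain S where "finite S" "card S = Suc (Suc r)" "S \<subseteq> {t. M t = 0}"
      using infinite_arbitrarily_large by blast
    then show False
      using card_zeros_le_Suc_card_zeros_deriv[OF D fin, of S] card by simp
  qed
  then show ?thesis
    using card_zeros_le_Suc_card_zeros_deriv[OF D fin _ order_refl] card
    unfolding zeros_bounded_def by simp
qed

text \<open>Rolle's theorem applied to \<open>exp (- a * t) * L t\<close>, whose derivative is
  \<open>exp (- a * t) * (L' t - a * L t)\<close>.\<close>

lemma zeros_bounded_Suc_if_deriv_minus:
  fixes L L' :: "real \<Rightarrow> real"
  assumes D: "\<And>t. (L has_real_derivative L' t) (at t)"
    and "zeros_bounded (\<lambda>t. L' t - a * L t) r"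
  shows "zeros_bounded L (Suc r)"
proof -
  define M where "M t = exp (- a * t) * L t" for t
  have "(M has_real_derivative exp (- a * t) * (L' t - a * L t)) (at t)" for t
    unfolding M_def by (auto intro!: derivative_eq_intros D simp: algebra_simps)
  moreover have "zeros_bounded (\<lambda>t. exp (- a * t) * (L' t - a * L t)) r"
    using assms(2) by (subst zeros_bounded_cong_zeros) auto
  ultimately have "zeros_bounded M (Suc r)"
    by (rule zeros_bounded_Suc_if_deriv)
  then show ?thesis
    unfolding M_def by (subst (asm) zeros_bounded_cong_zeros) auto
qed

lemma exp_sum_has_real_derivative:
  "((\<lambda>t. \<Sum>z\<in>D. c z * exp (t * z)) has_real_derivative (\<Sum>z\<in>D. c z * z * exp (t * z))) (at t)"
  by (auto intro!: derivative_eq_intros sum.cong simp: algebra_simps)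

lemma exp_sum_deriv_minus:
  fixes a t :: real
  assumes "finite D"
  shows "(\<Sum>z\<in>D. c z * z * exp (t * z)) - a * (\<Sum>z\<in>D. c z * exp (t * z))
       = (\<Sum>z\<in>D - {a}. c z * (z - a) * exp (t * z))"
proof -
  have "(\<Sum>z\<in>D. c z * z * exp (t * z)) - a * (\<Sum>z\<in>D. c z * exp (t * z))
      = (\<Sum>z\<in>D. c z * z * exp (t * z) - a * (c z * exp (t * z)))"
    by (subst sum_subtractf) (simp add: sum_distrib_left)
  also have "\<dots> = (\<Sum>z\<in>D. c z * (z - a) * exp (t * z))"
    by (intro sum.cong refl) (simp add: algebra_simps)
  also have "\<dots> = (\<Sum>z\<in>D - {a}. c z * (z - a) * exp (t * z))"
    using assms by (intro sum.mono_neutral_right) auto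
  finally show ?thesis .
qed

lemma zeros_bounded_exp_sum:
  "finite D \<Longrightarrow> zeros_bounded (\<lambda>t. \<Sum>z\<in>D. c z * exp (t * z)) (card D - 1)"
proof (induction D arbitrary: c rule: finite_induct)
  case empty
  then show ?case
    unfolding zeros_bounded_def by simp
next
  case (insert z0 D)
  show ?case
  proof (cases "D = {}")
    case True
    then show ?thesis
      unfolding zeros_bounded_def by auto
  next
    case False
    have "zeros_bounded (\<lambda>t. \<Sum>z\<in>D. c z * (z - z0) * exp (t * z)) (card D - 1)"
      using insert.IH[of "\<lambda>z. c z * (z - z0)"] by simp
    then have "zeros_bounded (\<lambda>t. \<Sum>z\<in>insert z0 D. c z * exp (t * z)) (Suc (card D - 1))"
      using insert.hyps exp_sum_deriv_minus[of "insert z0 D" c _ z0]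
      by (intro zeros_bounded_Suc_if_deriv_minus[OF exp_sum_has_real_derivative, where a = z0]) simp
    then show ?thesis
      using False insert.hyps by (simp add: card_gt_0_iff)
  qed
qed

section \<open>Sign changes\<close>

definition sign_changes_only_at :: "real set \<Rightarrow> (real \<Rightarrow> real) \<Rightarrow> bool" where
  "sign_changes_only_at C h \<longleftrightarrow> (\<forall>x y. x < y \<longrightarrow> {x<..<y} \<inter> C = {} \<longrightarrow> 0 \<le> h x * h y)"

lemma sign_changes_only_atD:
  assumes "sign_changes_only_at C h" "{min p q<..<max p q} \<inter> C = {}"
  shows "0 \<le> h p * h q"
proof (cases p q rule: linorder_cases)
  case greater
  then have "0 \<le> h q * h p"
    using assms unfolding sign_changes_only_at_def by (auto simp: min_def max_def)
  then show ?thesis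
    by (simp add: mult.commute)
qed (use assms in \<open>auto simp: sign_changes_only_at_def min_def max_def\<close>)

lemma same_sign_on:
  fixes h :: "'a \<Rightarrow> real"
  assumes "\<And>x y. x \<in> S \<Longrightarrow> y \<in> S \<Longrightarrow> 0 \<le> h x * h y"
  shows "(\<forall>x\<in>S. 0 \<le> h x) \<or> (\<forall>x\<in>S. h x \<le> 0)"
proof (rule ccontr)
  assume "\<not> ?thesis"
  then obtain x y where "x \<in> S" "y \<in> S" "h x < 0" "0 < h y"
    by (auto simp: not_le)
  then show False
    using assms[of x y] mult_neg_pos[of "h x" "h y"] by linarith
qed

lemma sign_changes_only_at_zeros:
  assumes "continuous_on UNIV h" "{y. h y = 0} \<subseteq> C"
  shows "sign_changes_only_at C h"
  unfolding sign_changes_only_at_def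
proof (intro allI impI)
  fix x y :: real
  assume xy: "x < y" "{x<..<y} \<inter> C = {}"
  have cont: "\<forall>w. x \<le> w \<and> w \<le> y \<longrightarrow> isCont h w"
    using assms(1) by (simp add: continuous_on_eq_continuous_at)
  show "0 \<le> h x * h y"
  proof (rule ccontr)
    assume "\<not> 0 \<le> h x * h y"
    then have "h x * h y < 0"
      by simp
    then have "h x < 0 \<and> 0 < h y \<or> h y < 0 \<and> 0 < h x"
      by (auto simp: mult_less_0_iff)
    then obtain w where "x \<le> w" "w \<le> y" "h w = 0"
      using IVT[of h x 0 y] IVT2[of h y 0 x] cont xy(1) by auto
    moreover from this \<open>\<not> 0 \<le> h x * h y\<close> have "w \<noteq> x" "w \<noteq> y"
      by auto
    ultimately have "w \<in> {x<..<y} \<inter> C"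
      using assms(2) by auto
    then show False
      using xy(2) by blast
  qed
qed

lemma sign_changes_only_at_linear_mult:
  assumes "sign_changes_only_at C h" "c \<in> C"
  shows "sign_changes_only_at C (\<lambda>y. (y - c) * h y)"
  unfolding sign_changes_only_at_def
proof (intro allI impI)
  fix x y :: real
  assume xy: "x < y" "{x<..<y} \<inter> C = {}"
  then have "\<not> (x < c \<and> c < y)"
    using assms(2) by auto
  then have "0 \<le> (x - c) * (y - c)"
    using xy(1) by (cases "c \<le> x") (auto intro: mult_nonpos_nonpos)
  moreover have "0 \<le> h x * h y"
    using assms(1) xy unfolding sign_changes_only_at_def by blast
  ultimately have "0 \<le> ((x - c) * (y - c)) * (h x * h y)"
    by (rule mult_nonneg_nonneg)
  then show "0 \<le> (x - c) * h x * ((y - c) * h y)"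
    by (simp only: mult_ac)
qed

lemma sign_change_across:
  assumes h: "sign_changes_only_at C h" and change: "\<not> sign_changes_only_at (C - {c}) h"
  obtains x0 y0 where "x0 < c" "c < y0" "{x0<..<y0} \<inter> (C - {c}) = {}" "h x0 * h y0 < 0"
proof -
  obtain x0 y0 where xy0: "x0 < y0" "{x0<..<y0} \<inter> (C - {c}) = {}" "h x0 * h y0 < 0"
    using change unfolding sign_changes_only_at_def by (auto simp: not_le)
  have "c \<in> {x0<..<y0}"
  proof (rule ccontr)
    assume "c \<notin> {x0<..<y0}"
    then have "{x0<..<y0} \<inter> C = {}"
      using xy0(2) by blast
    then have "0 \<le> h x0 * h y0"
      using h xy0(1) unfolding sign_changes_only_at_def by blast
    then show False
      using xy0(3) by simp
  qed
  then show ?thesis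
    using that[of x0 y0] xy0(2,3) by simp
qed

lemma sign_changes_only_at_remove_Min:
  assumes h: "sign_changes_only_at C h" and c: "c \<in> C" "\<And>d. d \<in> C \<Longrightarrow> c \<le> d"
    and change: "\<not> sign_changes_only_at (C - {c}) h"
  shows "sign_changes_only_at (C - {c}) (\<lambda>y. (y - c) * h y)"
  unfolding sign_changes_only_at_def
proof (intro allI impI)
  fix u v :: real
  assume uv: "u < v" "{u<..<v} \<inter> (C - {c}) = {}"
  obtain x0 y0 where xy0: "x0 < c" "c < y0" "{x0<..<y0} \<inter> (C - {c}) = {}" "h x0 * h y0 < 0"
    using sign_change_across[OF h change] by blast
  show "0 \<le> (u - c) * h u * ((v - c) * h v)"
  proof (cases "u < c \<and> c < v")
    case False
    then have "c \<notin> {u<..<v}"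
      by simp
    then have "{u<..<v} \<inter> C = {}"
      using uv(2) by blast
    then have "sign_changes_only_at C (\<lambda>y. (y - c) * h y) \<Longrightarrow> ?thesis"
      using uv(1) unfolding sign_changes_only_at_def by blast
    then show ?thesis
      using sign_changes_only_at_linear_mult[OF h c(1)] by blast
  next
    case True
    have "{min u x0<..<max u x0} \<inter> C = {}"
      using True xy0(1) c(2) by (force simp: not_le[symmetric])
    then have "0 \<le> h u * h x0"
      by (rule sign_changes_only_atD[OF h])
    moreover have "{min v y0<..<max v y0} \<subseteq> ({u<..<v} \<union> {x0<..<y0}) - {c}"
      using True xy0(1,2) by auto
    then have "{min v y0<..<max v y0} \<inter> C = {}"
      using uv(2) xy0(3) by blast
    then have "0 \<le> h v * h y0"
      by (rule sign_changes_only_atD[OF h])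
    ultimately have "0 \<le> (h u * h x0) * (h v * h y0)"
      by (rule mult_nonneg_nonneg)
    then have "0 \<le> (h u * h v) * (h x0 * h y0)"
      by (simp only: mult_ac)
    then have "h u * h v \<le> 0"
      using xy0(4) zero_le_mult_iff[of "h u * h v" "h x0 * h y0"] by linarith
    moreover have "(u - c) * (v - c) < 0"
      using True by (simp add: mult_neg_pos)
    ultimately show ?thesis
      using mult_nonpos_nonpos[of "(u - c) * (v - c)" "h u * h v"] by (simp add: mult_ac)
  qed
qed

section \<open>Zeros of a Laplace transform plus an exponential sum\<close>

lemma zeros_bounded_bilateral_laplace_same_sign:
  assumes h: "exp_integrable h" and sign: "sign_changes_only_at {} h"
  shows "zeros_bounded (bilateral_laplace h) 0"
proof (cases "\<exists>t0. bilateral_laplace h t0 = 0")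
  case True
  then obtain t0 where t0: "bilateral_laplace h t0 = 0"
    by blast
  have "0 \<le> h p * h q" for p q
    by (rule sign_changes_only_atD[OF sign]) simp
  then have "(\<forall>y\<in>UNIV. 0 \<le> h y) \<or> (\<forall>y\<in>UNIV. h y \<le> 0)"
    by (intro same_sign_on)
  then have "bilateral_laplace h t = 0" for t
  proof
    assume "\<forall>y\<in>UNIV. 0 \<le> h y"
    then show ?thesis
      using bilateral_laplace_eq_0_if_nonneg[OF h _ t0] by simp
  next
    assume "\<forall>y\<in>UNIV. h y \<le> 0"
    then have "bilateral_laplace (\<lambda>y. - h y) t = 0"
      using bilateral_laplace_eq_0_if_nonneg[OF exp_integrable_uminus[OF h], of t0 t] t0
      by (simp add: bilateral_laplace_uminus)
    then show ?thesis
      by (simp add: bilateral_laplace_uminus)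
  qed
  then show ?thesis
    unfolding zeros_bounded_def by simp
qed (simp add: zeros_bounded_def)

lemma zeros_bounded_bilateral_laplace_exp_sum_Suc:
  assumes h: "exp_integrable h" and D: "finite D"
    and "zeros_bounded (\<lambda>t. bilateral_laplace (\<lambda>y. (y - a) * h y) t
                          + (\<Sum>z\<in>D - {a}. c z * (z - a) * exp (t * z))) r"
  shows "zeros_bounded (\<lambda>t. bilateral_laplace h t + (\<Sum>z\<in>D. c z * exp (t * z))) (Suc r)"
proof (rule zeros_bounded_Suc_if_deriv_minus)
  show "((\<lambda>t. bilateral_laplace h t + (\<Sum>z\<in>D. c z * exp (t * z))) has_real_derivative
      bilateral_laplace (\<lambda>y. y * h y) t + (\<Sum>z\<in>D. c z * z * exp (t * z))) (at t)" for t
    by (intro DERIV_add bilateral_laplace_has_real_derivative h exp_sum_has_real_derivative)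
  have "bilateral_laplace (\<lambda>y. y * h y) t + (\<Sum>z\<in>D. c z * z * exp (t * z))
        - a * (bilateral_laplace h t + (\<Sum>z\<in>D. c z * exp (t * z)))
      = bilateral_laplace (\<lambda>y. (y - a) * h y) t + (\<Sum>z\<in>D - {a}. c z * (z - a) * exp (t * z))" for t
    unfolding bilateral_laplace_linear_mult[OF h] exp_sum_deriv_minus[OF D, symmetric]
    by (simp add: algebra_simps)
  then show "zeros_bounded (\<lambda>t. bilateral_laplace (\<lambda>y. y * h y) t + (\<Sum>z\<in>D. c z * z * exp (t * z))
      - a * (bilateral_laplace h t + (\<Sum>z\<in>D. c z * exp (t * z)))) r"
    using assms(3) by simp
qed

text \<open>With \<open>a = Min C\<close>, differentiating \<open>exp (- a * t) * (\<dots>)\<close> replaces \<open>h\<close> by \<open>(y - a) * h y\<close> and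
  deletes \<open>a\<close> from the exponential sum, at the cost of one zero (Rolle). The new function still
  changes sign only in \<open>C\<close>, and only in \<open>C - {a}\<close> if \<open>a\<close> was a sign change of \<open>h\<close>. If \<open>a\<close> plays
  neither role it is simply dropped from \<open>C\<close>.\<close>

lemma zeros_bounded_bilateral_laplace_exp_sum:
  assumes "finite C" "D \<subseteq> C" "exp_integrable h" "sign_changes_only_at C h"
  shows "zeros_bounded (\<lambda>t. bilateral_laplace h t + (\<Sum>z\<in>D. c z * exp (t * z))) (card C + card D)"
  using assms
proof (induction "card C + card D" arbitrary: C D h c rule: less_induct)
  case less
  note C = less.prems(1) and DC = less.prems(2) and h = less.prems(3) and sign = less.prems(4)
  have D: "finite D"
    using C DC finite_subset by blast
  show ?case
  proof (cases "C = {}")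
    case True
    then show ?thesis
      using zeros_bounded_bilateral_laplace_same_sign[OF h] sign DC by simp
  next
    case False
    define a where "a = Min C"
    have a: "a \<in> C" "\<And>d. d \<in> C \<Longrightarrow> a \<le> d"
      using C False by (simp_all add: a_def)
    have h': "exp_integrable (\<lambda>y. (y - a) * h y)"
      using exp_integrable_linear_mult[OF h] .
    have cardC: "card C = Suc (card (C - {a}))"
      using C a(1) by (rule card.remove)
    consider (in_D) "a \<in> D" | (same_sign) "a \<notin> D" "sign_changes_only_at (C - {a}) h"
      | (sign_change) "a \<notin> D" "\<not> sign_changes_only_at (C - {a}) h"
      by blast
    then show ?thesis
    proof cases
      case in_D
      have "zeros_bounded (\<lambda>t. bilateral_laplace (\<lambda>y. (y - a) * h y) t
          + (\<Sum>z\<in>D - {a}. c z * (z - a) * exp (t * z))) (card C + card (D - {a}))"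
        using in_D C DC D h' sign_changes_only_at_linear_mult[OF sign a(1)] card_Diff1_less[OF D in_D]
        by (intro less.hyps) auto
      then show ?thesis
        using zeros_bounded_bilateral_laplace_exp_sum_Suc[OF h D] card.remove[OF D in_D] by simp
    next
      case same_sign
      have "zeros_bounded (\<lambda>t. bilateral_laplace h t + (\<Sum>z\<in>D. c z * exp (t * z))) (card (C - {a}) + card D)"
        using same_sign C DC h cardC by (intro less.hyps) auto
      then show ?thesis
        using cardC by (elim zeros_bounded_mono) simp
    next
      case sign_change
      then have "D - {a} = D"
        by simp
      moreover have "zeros_bounded (\<lambda>t. bilateral_laplace (\<lambda>y. (y - a) * h y) t
          + (\<Sum>z\<in>D. c z * (z - a) * exp (t * z))) (card (C - {a}) + card D)"
        using sign_change C DC h' sign_changes_only_at_remove_Min[OF sign a] cardC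
        by (intro less.hyps) auto
      ultimately show ?thesis
        using zeros_bounded_bilateral_laplace_exp_sum_Suc[OF h D, of a c] cardC by simp
    qed
  qed
qed

lemma zeros_bounded_bilateral_laplace_exp_sum_of_continuous:
  assumes h: "exp_integrable h" "continuous_on UNIV h" "zeros_bounded h (2 * m - 2)"
    "\<not> (\<forall>y. h y = 0) \<Longrightarrow> 0 < m"
    and D: "finite D" "card D \<le> n" "0 < n"
  shows "zeros_bounded (\<lambda>t. bilateral_laplace h t + (\<Sum>z\<in>D. c z * exp (t * z))) (2 * (m + n) - 2)"
proof (cases "\<forall>y. h y = 0")
  case True
  then have "(\<lambda>t. bilateral_laplace h t + (\<Sum>z\<in>D. c z * exp (t * z))) = (\<lambda>t. \<Sum>z\<in>D. c z * exp (t * z))"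
    by (simp add: bilateral_laplace_def)
  then show ?thesis
    using zeros_bounded_mono[OF zeros_bounded_exp_sum[OF D(1), of c]] D(2,3) by simp
next
  case False
  define C where "C = {y. h y = 0} \<union> D"
  have "finite {y. h y = 0}" "card {y. h y = 0} \<le> 2 * m - 2"
    using h(3) False unfolding zeros_bounded_def by auto
  then have "finite C" "card C \<le> 2 * m - 2 + card D"
    unfolding C_def using D(1) card_Un_le[of "{y. h y = 0}" D] by auto
  moreover have "zeros_bounded (\<lambda>t. bilateral_laplace h t + (\<Sum>z\<in>D. c z * exp (t * z))) (card C + card D)"
    using \<open>finite C\<close> h(1) sign_changes_only_at_zeros[OF h(2)]
    by (intro zeros_bounded_bilateral_laplace_exp_sum) (auto simp: C_def)
  ultimately show ?thesis
    using h(4)[OF False] D(2) by (elim zeros_bounded_mono) simp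
qed

section \<open>Zeros of Gaussian combinations\<close>

text \<open>Completing the square: \<open>exp (- \<gamma> * y\<^sup>2 + d * y)\<close> has bilateral Laplace transform
  \<open>sqrt (pi / \<gamma>) * exp ((d + t)\<^sup>2 / (4 * \<gamma>))\<close>, and \<open>\<gamma>, d\<close> are chosen so that at \<open>t = 2 * A * x\<close>
  the exponent \<open>(d + t)\<^sup>2 / (4 * \<gamma>)\<close> equals \<open>(A - al) * x\<^sup>2 + b * x\<close> up to a constant.\<close>

lemma gaussian_eq_bilateral_laplace:
  fixes al A a b x :: real
  assumes "0 < al" "al < A"
  defines "\<gamma> \<equiv> A\<^sup>2 / (A - al)" and "d \<equiv> b * A / (A - al)"
  shows "a * exp (- al * x\<^sup>2 + b * x) = exp (- A * x\<^sup>2) *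
    bilateral_laplace (\<lambda>y. a / (sqrt (pi / \<gamma>) * exp (d\<^sup>2 / (4 * \<gamma>))) * exp (- \<gamma> * y\<^sup>2 + d * y)) (2 * A * x)"
proof -
  have A: "0 < A" "0 < A - al"
    using assms by simp_all
  then have \<gamma>: "0 < \<gamma>"
    unfolding \<gamma>_def by simp
  have d: "d * (A - al) = b * A"
    unfolding d_def using A by simp
  have "(d + 2 * A * x)\<^sup>2 / (4 * \<gamma>) = d\<^sup>2 / (4 * \<gamma>) + (A * x * (d * (A - al)) + A\<^sup>2 * x\<^sup>2 * (A - al)) / A\<^sup>2"
    unfolding \<gamma>_def using A by (simp add: field_simps power2_eq_square)
  also have "\<dots> = d\<^sup>2 / (4 * \<gamma>) + b * x + (A - al) * x\<^sup>2"
    unfolding d using A by (simp add: field_simps power2_eq_square)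
  finally have "- A * x\<^sup>2 + (d + 2 * A * x)\<^sup>2 / (4 * \<gamma>) = d\<^sup>2 / (4 * \<gamma>) + (- al * x\<^sup>2 + b * x)"
    by (simp add: algebra_simps)
  then have "exp (- A * x\<^sup>2) * exp ((d + 2 * A * x)\<^sup>2 / (4 * \<gamma>)) = exp (d\<^sup>2 / (4 * \<gamma>)) * exp (- al * x\<^sup>2 + b * x)"
    by (simp only: exp_add[symmetric])
  moreover have "sqrt (pi / \<gamma>) \<noteq> 0"
    using \<gamma> by simp
  ultimately show ?thesis
    unfolding bilateral_laplace_gaussian[OF \<gamma>] by (simp add: field_simps)
qed

lemma gaussian_sum_eq_bilateral_laplace:
  fixes al a b :: "'i \<Rightarrow> real"
  assumes J: "finite J" and al: "\<forall>i\<in>J. 0 < al i \<and> al i < A"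
  obtains \<gamma> a' d where "\<And>i. i \<in> J \<Longrightarrow> 0 < \<gamma> i"
    and "\<And>x. (\<Sum>i\<in>J. a i * exp (- al i * x\<^sup>2 + b i * x)) = exp (- A * x\<^sup>2) *
           bilateral_laplace (\<lambda>y. \<Sum>i\<in>J. a' i * exp (- \<gamma> i * y\<^sup>2 + d i * y)) (2 * A * x)"
proof -
  define \<gamma> d where "\<gamma> i = A\<^sup>2 / (A - al i)" and "d i = b i * A / (A - al i)" for i
  define a' where "a' i = a i / (sqrt (pi / \<gamma> i) * exp ((d i)\<^sup>2 / (4 * \<gamma> i)))" for i
  have \<gamma>: "0 < \<gamma> i" if "i \<in> J" for i
    using bspec[OF al that] by (simp add: \<gamma>_def)
  show ?thesis
  proof (rule that[of \<gamma> a' d])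
    fix x
    have "(\<Sum>i\<in>J. a i * exp (- al i * x\<^sup>2 + b i * x)) = (\<Sum>i\<in>J. exp (- A * x\<^sup>2) *
        bilateral_laplace (\<lambda>y. a' i * exp (- \<gamma> i * y\<^sup>2 + d i * y)) (2 * A * x))"
      unfolding a'_def \<gamma>_def d_def using al by (intro sum.cong refl gaussian_eq_bilateral_laplace) auto
    also have "\<dots> = exp (- A * x\<^sup>2) *
        bilateral_laplace (\<lambda>y. \<Sum>i\<in>J. a' i * exp (- \<gamma> i * y\<^sup>2 + d i * y)) (2 * A * x)"
      unfolding sum_distrib_left[symmetric]
      by (rule arg_cong[where f = "\<lambda>s. exp (- A * x\<^sup>2) * s"], rule bilateral_laplace_sum[symmetric, OF J])
        (use \<gamma> exp_integrable_gaussian in blast)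
    finally show "(\<Sum>i\<in>J. a i * exp (- al i * x\<^sup>2 + b i * x)) = \<dots>" .
  qed (rule \<gamma>)
qed

lemma gaussian_sum_eq_exp_sum:
  fixes a b :: "'i \<Rightarrow> real"
  assumes "finite T" "A \<noteq> 0"
  defines "z \<equiv> \<lambda>i. b i / (2 * A)"
  shows "(\<Sum>i\<in>T. a i * exp (- A * x\<^sup>2 + b i * x))
       = exp (- A * x\<^sup>2) * (\<Sum>w\<in>z ` T. (\<Sum>i\<in>{i\<in>T. z i = w}. a i) * exp ((2 * A * x) * w))"
proof -
  have "(2 * A * x) * z i = b i * x" for i
    unfolding z_def using assms(2) by simp
  then have "(\<Sum>i\<in>T. a i * exp (- A * x\<^sup>2 + b i * x)) = exp (- A * x\<^sup>2) * (\<Sum>i\<in>T. a i * exp ((2 * A * x) * z i))"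
    unfolding sum_distrib_left by (intro sum.cong refl) (simp only: exp_add mult_ac)
  also have "(\<Sum>i\<in>T. a i * exp ((2 * A * x) * z i))
      = (\<Sum>w\<in>z ` T. (\<Sum>i\<in>{i\<in>T. z i = w}. a i) * exp ((2 * A * x) * w))"
    unfolding sum.image_gen[OF assms(1), of "\<lambda>i. a i * exp ((2 * A * x) * z i)" z] sum_distrib_right
    by (intro sum.cong refl) auto
  finally show ?thesis .
qed

lemma gaussian_sum_eq_sharpest_factor:
  fixes a al b :: "'i \<Rightarrow> real"
  assumes I: "finite I" and al: "\<forall>i\<in>I. 0 < al i \<and> al i \<le> A" and "0 < A"
  obtains \<gamma> D a' d c where "\<And>i. i \<in> {i\<in>I. al i < A} \<Longrightarrow> 0 < \<gamma> i"
    and "finite D" "card D \<le> card {i\<in>I. al i = A}"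
    and "\<And>x. (\<Sum>i\<in>I. a i * exp (- al i * x\<^sup>2 + b i * x)) = exp (- A * x\<^sup>2) *
      (bilateral_laplace (\<lambda>y. \<Sum>i\<in>{i\<in>I. al i < A}. a' i * exp (- \<gamma> i * y\<^sup>2 + d i * y)) (2 * A * x)
        + (\<Sum>w\<in>D. c w * exp (2 * A * x * w)))"
proof -
  define J T where "J = {i\<in>I. al i < A}" and "T = {i\<in>I. al i = A}"
  have IJT: "I = J \<union> T" "J \<inter> T = {}" "finite J" "finite T"
    using al I by (auto simp: J_def T_def less_le)
  have "\<forall>i\<in>J. 0 < al i \<and> al i < A"
    using al by (auto simp: J_def)
  then obtain \<gamma> a' d where \<gamma>: "\<And>i. i \<in> J \<Longrightarrow> 0 < \<gamma> i" and J_eq: "\<And>x.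
      (\<Sum>i\<in>J. a i * exp (- al i * x\<^sup>2 + b i * x)) = exp (- A * x\<^sup>2) *
        bilateral_laplace (\<lambda>y. \<Sum>i\<in>J. a' i * exp (- \<gamma> i * y\<^sup>2 + d i * y)) (2 * A * x)"
    by (rule gaussian_sum_eq_bilateral_laplace[OF IJT(3), where a = a and b = b]) (rule that)
  define z where "z i = b i / (2 * A)" for i
  define c where "c w = (\<Sum>i\<in>{i\<in>T. z i = w}. a i)" for w
  have "(\<Sum>i\<in>I. a i * exp (- al i * x\<^sup>2 + b i * x)) = exp (- A * x\<^sup>2) *
      (bilateral_laplace (\<lambda>y. \<Sum>i\<in>J. a' i * exp (- \<gamma> i * y\<^sup>2 + d i * y)) (2 * A * x)
        + (\<Sum>w\<in>z ` T. c w * exp (2 * A * x * w)))" for x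
  proof -
    have "(\<Sum>i\<in>T. a i * exp (- al i * x\<^sup>2 + b i * x)) = (\<Sum>i\<in>T. a i * exp (- A * x\<^sup>2 + b i * x))"
      by (intro sum.cong refl) (simp add: T_def)
    also have "\<dots> = exp (- A * x\<^sup>2) * (\<Sum>w\<in>z ` T. c w * exp (2 * A * x * w))"
      unfolding c_def z_def using IJT(4) \<open>0 < A\<close> by (intro gaussian_sum_eq_exp_sum) auto
    finally show ?thesis
      unfolding IJT(1) sum.union_disjoint[OF IJT(3,4,2)] J_eq by (simp only: distrib_left)
  qed
  then show ?thesis
    using \<gamma> IJT(4) card_image_le[OF IJT(4), of z]
    by (intro that[of \<gamma> "z ` T" a' d c]) (simp_all add: J_def T_def)
qed

lemma zeros_bounded_gaussian_sum:
  fixes a al b :: "'i \<Rightarrow> real"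
  assumes "finite I" "\<And>i. i \<in> I \<Longrightarrow> 0 < al i"
  shows "zeros_bounded (\<lambda>x. \<Sum>i\<in>I. a i * exp (- al i * x\<^sup>2 + b i * x)) (2 * card I - 2)"
  using assms
proof (induction "card I" arbitrary: I a al b rule: less_induct)
  case less
  note I = less.prems(1) and al = less.prems(2)
  show ?case
  proof (cases "I = {}")
    case True
    then show ?thesis
      unfolding zeros_bounded_def by simp
  next
    case False
    define A where "A = Max (al ` I)"
    have A: "\<forall>i\<in>I. 0 < al i \<and> al i \<le> A" "0 < A"
      using I False al by (auto simp: A_def Max_gr_iff)
    define J T where "J = {i\<in>I. al i < A}" and "T = {i\<in>I. al i = A}"
    have "A \<in> al ` I"
      using I False by (simp add: A_def)
    then have "I = J \<union> T" "J \<inter> T = {}" "finite J" "finite T" "T \<noteq> {}"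
      using A I by (auto simp: J_def T_def less_le)
    then have card: "card I = card J + card T" "card J < card I" "0 < card T"
      by (simp_all add: card_Un_disjoint card_gt_0_iff)
    obtain \<gamma> D a' d c where \<gamma>: "\<And>i. i \<in> J \<Longrightarrow> 0 < \<gamma> i" and D: "finite D" "card D \<le> card T"
      and factor: "\<And>x. (\<Sum>i\<in>I. a i * exp (- al i * x\<^sup>2 + b i * x)) = exp (- A * x\<^sup>2) *
        (bilateral_laplace (\<lambda>y. \<Sum>i\<in>J. a' i * exp (- \<gamma> i * y\<^sup>2 + d i * y)) (2 * A * x)
          + (\<Sum>w\<in>D. c w * exp (2 * A * x * w)))"
      by (rule gaussian_sum_eq_sharpest_factor[OF I A, where a = a and b = b, folded J_def T_def]) (rule that)
    define h where "h y = (\<Sum>i\<in>J. a' i * exp (- \<gamma> i * y\<^sup>2 + d i * y))" for y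
    have "zeros_bounded (\<lambda>t. bilateral_laplace h t + (\<Sum>w\<in>D. c w * exp (t * w))) (2 * card I - 2)"
      unfolding card(1)
    proof (rule zeros_bounded_bilateral_laplace_exp_sum_of_continuous[OF _ _ _ _ D card(3)])
      show "zeros_bounded h (2 * card J - 2)"
        unfolding h_def[abs_def] using card(2) \<open>finite J\<close> \<gamma> by (intro less.hyps) auto
      show "exp_integrable h"
        unfolding h_def[abs_def] using \<open>finite J\<close> \<gamma> by (intro exp_integrable_sum exp_integrable_gaussian)
      show "continuous_on UNIV h"
        unfolding h_def[abs_def] by (intro continuous_intros)
      show "0 < card J" if "\<not> (\<forall>y. h y = 0)"
        using that \<open>finite J\<close> unfolding h_def by (auto simp: card_gt_0_iff)
    qed
    then have "zeros_bounded (\<lambda>x. bilateral_laplace h (2 * A * x) + (\<Sum>w\<in>D. c w * exp (2 * A * x * w)))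
        (2 * card I - 2)"
      using \<open>0 < A\<close> zeros_bounded_compose_scale[of _ _ "2 * A"] by simp
    then show ?thesis
      unfolding factor h_def[symmetric] by (subst zeros_bounded_cong_zeros) auto
  qed
qed

section \<open>Differences of Gaussian mixtures\<close>

lemma mixture_eq_gaussian_sum:
  "mixture k (w, mu, tau) x = (\<Sum>i<k. w i * (tau i / sqrt (2 * pi)) * exp (- ((tau i)\<^sup>2 * (mu i)\<^sup>2) / 2)
      * exp (- ((tau i)\<^sup>2 / 2) * x\<^sup>2 + ((tau i)\<^sup>2 * mu i) * x))"
  unfolding mixture_def prod.case
proof (intro sum.cong refl)
  fix i
  have "- ((tau i)\<^sup>2 * (x - mu i)\<^sup>2) / 2
      = - ((tau i)\<^sup>2 * (mu i)\<^sup>2) / 2 + (- ((tau i)\<^sup>2 / 2) * x\<^sup>2 + ((tau i)\<^sup>2 * mu i) * x)"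
    by (simp add: power2_eq_square field_simps)
  then show "w i * (tau i / sqrt (2 * pi)) * exp (- ((tau i)\<^sup>2 * (x - mu i)\<^sup>2) / 2)
      = w i * (tau i / sqrt (2 * pi)) * exp (- ((tau i)\<^sup>2 * (mu i)\<^sup>2) / 2)
        * exp (- ((tau i)\<^sup>2 / 2) * x\<^sup>2 + ((tau i)\<^sup>2 * mu i) * x)"
    by (simp only: exp_add mult.assoc)
qed

lemma zeros_bounded_mixture_diff:
  assumes "\<theta>1 \<in> Theta k" "\<theta>2 \<in> Theta k"
  shows "zeros_bounded (\<lambda>x. mixture k \<theta>1 x - mixture k \<theta>2 x) (4 * k - 2)"
proof -
  obtain w1 mu1 tau1 w2 mu2 tau2 where \<theta>: "\<theta>1 = (w1, mu1, tau1)" "\<theta>2 = (w2, mu2, tau2)"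
    by (cases \<theta>1, cases \<theta>2) auto
  define coef where "coef w mu tau i = w i * (tau i / sqrt (2 * pi)) * exp (- ((tau i)\<^sup>2 * (mu i)\<^sup>2) / 2)"
    for w mu tau :: "nat \<Rightarrow> real" and i
  define a where "a = case_sum (coef w1 mu1 tau1) (\<lambda>i. - coef w2 mu2 tau2 i)"
  define al where "al = case_sum (\<lambda>i. (tau1 i)\<^sup>2 / 2) (\<lambda>i. (tau2 i)\<^sup>2 / 2)"
  define b where "b = case_sum (\<lambda>i. (tau1 i)\<^sup>2 * mu1 i) (\<lambda>i. (tau2 i)\<^sup>2 * mu2 i)"
  have "mixture k \<theta>1 x - mixture k \<theta>2 x = (\<Sum>j\<in>{..<k} <+> {..<k}. a j * exp (- al j * x\<^sup>2 + b j * x))" for x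
    unfolding \<theta> mixture_eq_gaussian_sum by (simp add: sum.Plus a_def al_def b_def coef_def sum_negf)
  moreover have "zeros_bounded (\<lambda>x. \<Sum>j\<in>{..<k} <+> {..<k}. a j * exp (- al j * x\<^sup>2 + b j * x))
      (2 * card ({..<k::nat} <+> {..<k}) - 2)"
    using assms unfolding \<theta> Theta_def al_def by (intro zeros_bounded_gaussian_sum) auto
  ultimately show ?thesis
    by (simp add: card_Plus)
qed

lemma integrable_mixture:
  assumes "\<theta> \<in> Theta k"
  shows "integrable lborel (mixture k \<theta>)"
proof -
  obtain w mu tau where \<theta>: "\<theta> = (w, mu, tau)"
    by (cases \<theta>) auto
  have "integrable lborel (\<lambda>x. c * exp (- ((tau i)\<^sup>2 / 2) * x\<^sup>2 + ((tau i)\<^sup>2 * mu i) * x))" if "i < k" for c i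
    using assms that has_bochner_integral_gaussian[of "(tau i)\<^sup>2 / 2" "(tau i)\<^sup>2 * mu i"]
    unfolding \<theta> Theta_def by (auto simp: has_bochner_integral_iff)
  then show ?thesis
    unfolding \<theta> mixture_eq_gaussian_sum[abs_def] by auto
qed

lemma continuous_on_mixture: "continuous_on UNIV (mixture k \<theta>)"
  unfolding mixture_def[abs_def] by (cases \<theta>) (auto intro!: continuous_intros)

section \<open>The \<open>A_K\<close> norm of a function with few zeros\<close>

lemma set_integrable_lborel:
  fixes g :: "real \<Rightarrow> real"
  shows "integrable lborel g \<Longrightarrow> I \<in> sets borel \<Longrightarrow> set_integrable lborel I g"
  unfolding set_integrable_def by (rule integrable_mult_indicator) auto

lemma abs_set_integral_le:
  fixes g :: "real \<Rightarrow> real"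
  assumes "integrable lborel g" "I \<in> sets borel"
  shows "\<bar>LINT x:I|lborel. g x\<bar> \<le> (LINT x:I|lborel. \<bar>g x\<bar>)"
  using set_integral_norm_bound[OF set_integrable_lborel[OF assms]] by simp

lemma abs_set_integral_eq_if_same_sign:
  fixes g :: "real \<Rightarrow> real"
  assumes "integrable lborel g" "I \<in> sets borel" "(\<forall>x\<in>I. 0 \<le> g x) \<or> (\<forall>x\<in>I. g x \<le> 0)"
  shows "\<bar>LINT x:I|lborel. g x\<bar> = (LINT x:I|lborel. \<bar>g x\<bar>)"
  using assms(3)
proof
  assume nonneg: "\<forall>x\<in>I. 0 \<le> g x"
  then have "(LINT x:I|lborel. \<bar>g x\<bar>) = (LINT x:I|lborel. g x)"
    using assms(2) by (intro set_lebesgue_integral_cong) auto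
  moreover have "0 \<le> (LINT x:I|lborel. g x)"
    unfolding set_lebesgue_integral_def using nonneg by (intro integral_nonneg_AE) (auto simp: indicator_def)
  ultimately show ?thesis
    by simp
next
  assume nonpos: "\<forall>x\<in>I. g x \<le> 0"
  then have "(LINT x:I|lborel. \<bar>g x\<bar>) = (LINT x:I|lborel. - g x)"
    using assms(2) by (intro set_lebesgue_integral_cong) auto
  moreover have "0 \<le> (LINT x:I|lborel. - g x)"
    unfolding set_lebesgue_integral_def using nonpos by (intro integral_nonneg_AE) (auto simp: indicator_def)
  ultimately show ?thesis
    by (simp add: set_lebesgue_integral_def)
qed

lemma sum_set_integral_abs_eq:
  fixes g :: "real \<Rightarrow> real"
  assumes "integrable lborel g" "F \<in> interval_families K"
  shows "(\<Sum>I\<in>F. LINT x:I|lborel. \<bar>g x\<bar>) = (LINT x:\<Union>F|lborel. \<bar>g x\<bar>)"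
proof -
  have "finite F" "disjoint_family_on id F" "\<And>I. I \<in> F \<Longrightarrow> I \<in> sets borel"
    using assms(2) unfolding interval_families_def disjoint_family_on_def
    by (auto intro: real_interval_borel_measurable)
  then show ?thesis
    using set_integral_finite_Union[of F id lborel "\<lambda>x. \<bar>g x\<bar>"] assms(1)
    by (simp add: set_integrable_lborel)
qed

lemma sum_abs_set_integral_le_L1_norm:
  fixes g :: "real \<Rightarrow> real"
  assumes g: "integrable lborel g" and F: "F \<in> interval_families K"
  shows "(\<Sum>I\<in>F. \<bar>LINT x:I|lborel. g x\<bar>) \<le> L1_norm g"
proof -
  have "(\<Sum>I\<in>F. \<bar>LINT x:I|lborel. g x\<bar>) \<le> (\<Sum>I\<in>F. LINT x:I|lborel. \<bar>g x\<bar>)"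
    using F unfolding interval_families_def
    by (intro sum_mono abs_set_integral_le g) (auto intro: real_interval_borel_measurable)
  also have "\<dots> = (LINT x:\<Union>F|lborel. \<bar>g x\<bar>)"
    by (rule sum_set_integral_abs_eq[OF g F])
  also have "\<dots> \<le> (\<integral>x. \<bar>g x\<bar> \<partial>lborel)"
  proof -
    have "\<Union>F \<in> sets borel"
      using F unfolding interval_families_def
      by (intro sets.finite_Union) (auto intro: real_interval_borel_measurable)
    then show ?thesis
      unfolding set_lebesgue_integral_def using g
      by (intro integral_mono integrable_mult_indicator) (auto simp: indicator_def)
  qed
  finally show ?thesis
    unfolding L1_norm_def .
qed

definition cell_after :: "real set \<Rightarrow> real \<Rightarrow> real set" where
  "cell_after C c = {x. c < x \<and> (\<forall>d\<in>C. c < d \<longrightarrow> x \<le> d)}"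

definition cut_cells :: "real set \<Rightarrow> real set set" where
  "cut_cells C = insert {x. \<forall>d\<in>C. x \<le> d} (cell_after C ` C)"

lemma cut_cells_avoid:
  assumes "I \<in> cut_cells C" "a \<in> I" "b \<in> I"
  shows "{a<..<b} \<inter> C = {}"
  using assms unfolding cut_cells_def cell_after_def by force

lemma Union_cut_cells:
  assumes "finite C"
  shows "\<Union>(cut_cells C) = UNIV"
proof (intro set_eqI iffI UNIV_I)
  fix x
  show "x \<in> \<Union>(cut_cells C)"
  proof (cases "\<forall>d\<in>C. x \<le> d")
    case False
    define c where "c = Max {d\<in>C. d < x}"
    have fin: "finite {d\<in>C. d < x}" and "{d\<in>C. d < x} \<noteq> {}"
      using assms False by (auto simp: not_le)
    then have "c \<in> {d\<in>C. d < x}"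
      unfolding c_def by (rule Max_in)
    moreover have "x \<le> d" if "d \<in> C" "c < d" for d
    proof (rule ccontr)
      assume "\<not> x \<le> d"
      then have "d \<le> c"
        unfolding c_def using that by (intro Max_ge[OF fin]) simp
      then show False
        using that by simp
    qed
    ultimately have "x \<in> cell_after C c" "c \<in> C"
      unfolding cell_after_def by auto
    then show ?thesis
      unfolding cut_cells_def by blast
  qed (auto simp: cut_cells_def)
qed

lemma cell_after_nonempty:
  assumes "finite C"
  shows "cell_after C c \<noteq> {}"
proof (cases "\<exists>d\<in>C. c < d")
  case True
  then have "finite {d\<in>C. c < d}" "{d\<in>C. c < d} \<noteq> {}"
    using assms by auto
  then have "Min {d\<in>C. c < d} \<in> cell_after C c"
    unfolding cell_after_def using Min_in by (fastforce intro: Min_le)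
  then show ?thesis
    by blast
next
  case False
  then have "c + 1 \<in> cell_after C c"
    unfolding cell_after_def by auto
  then show ?thesis
    by blast
qed

lemma cut_cells_in_interval_families:
  assumes C: "finite C"
  shows "cut_cells C \<in> interval_families (Suc (card C))"
proof -
  define L where "L = {x. \<forall>d\<in>C. x \<le> d}"
  have "L \<noteq> {}"
    using C by (cases "C = {}") (auto simp: L_def intro!: exI[of _ "Min C"])
  have disj: "cell_after C c \<inter> cell_after C c' = {}" if "c \<in> C" "c' \<in> C" "c < c'" for c c'
    using that unfolding cell_after_def by force
  then have disj': "cell_after C c \<inter> cell_after C c' = {}" if "c \<in> C" "c' \<in> C" "c \<noteq> c'" for c c'
    using that by (metis inf_commute linorder_neqE_linordered_idom)
  have disjL: "L \<inter> cell_after C c = {}" if "c \<in> C" for c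
    using that unfolding L_def cell_after_def by force
  have "inj_on (cell_after C) C"
    using disj' cell_after_nonempty[OF C] by (metis inf.idem inj_onI)
  moreover have "L \<notin> cell_after C ` C"
    using disjL \<open>L \<noteq> {}\<close> by auto
  ultimately have "card (cut_cells C) = Suc (card C)"
    unfolding cut_cells_def L_def[symmetric] using C by (simp add: card_image)
  moreover have "is_interval I" if "I \<in> cut_cells C" for I
    using that unfolding cut_cells_def cell_after_def is_interval_1 by (force intro: order_trans)
  moreover have "I \<inter> J = {}" if "I \<in> cut_cells C" "J \<in> cut_cells C" "I \<noteq> J" for I J
    using that disj' disjL unfolding cut_cells_def L_def[symmetric] by blast
  ultimately show ?thesis
    unfolding interval_families_def using C by (simp add: cut_cells_def)
qed

lemma interval_family_avoiding:
  assumes "finite C" "card C < K"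
  obtains F where "F \<in> interval_families K" "\<Union>F = UNIV"
    "\<And>I a b. I \<in> F \<Longrightarrow> a \<in> I \<Longrightarrow> b \<in> I \<Longrightarrow> {a<..<b} \<inter> C = {}"
proof -
  have "infinite (UNIV - C)"
    using assms(1) by (simp add: infinite_UNIV_char_0 Diff_infinite_finite)
  then obtain S where S: "finite S" "card S = K - 1 - card C" "S \<subseteq> UNIV - C"
    using infinite_arbitrarily_large by blast
  have "C \<inter> S = {}"
    using S(3) by blast
  then have fin: "finite (C \<union> S)" and card: "Suc (card (C \<union> S)) = K"
    using assms S by (simp_all add: card_Un_disjoint)
  show ?thesis
  proof (rule that)
    show "cut_cells (C \<union> S) \<in> interval_families K"
      using cut_cells_in_interval_families[OF fin] card by simp
    show "\<Union>(cut_cells (C \<union> S)) = UNIV"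
      by (rule Union_cut_cells[OF fin])
    show "{a<..<b} \<inter> C = {}" if "I \<in> cut_cells (C \<union> S)" "a \<in> I" "b \<in> I" for I a b
      using cut_cells_avoid[OF that] by blast
  qed
qed

lemma AK_norm_eq_L1_norm_if_zeros_bounded:
  fixes g :: "real \<Rightarrow> real"
  assumes g: "integrable lborel g" "continuous_on UNIV g" "zeros_bounded g r" and "r < K"
  shows "AK_norm K g = L1_norm g"
proof -
  define C where "C = (if \<forall>x. g x = 0 then {} else {x. g x = 0})"
  have "finite C" "card C < K"
    using g(3) \<open>r < K\<close> unfolding C_def zeros_bounded_def by auto
  then obtain F where F: "F \<in> interval_families K" "\<Union>F = UNIV"
    and avoid: "\<And>I a b. I \<in> F \<Longrightarrow> a \<in> I \<Longrightarrow> b \<in> I \<Longrightarrow> {a<..<b} \<inter> C = {}"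
    by (rule interval_family_avoiding) (rule that)
  have "(\<forall>x\<in>I. 0 \<le> g x) \<or> (\<forall>x\<in>I. g x \<le> 0)" if "I \<in> F" for I
  proof (cases "\<forall>x. g x = 0")
    case False
    then have "sign_changes_only_at C g"
      unfolding C_def using sign_changes_only_at_zeros[OF g(2)] by simp
    then show ?thesis
      using avoid[OF that] by (intro same_sign_on sign_changes_only_atD) (auto simp: min_def max_def)
  qed simp
  then have "(\<Sum>I\<in>F. \<bar>LINT x:I|lborel. g x\<bar>) = (\<Sum>I\<in>F. LINT x:I|lborel. \<bar>g x\<bar>)"
    using F(1) unfolding interval_families_def
    by (intro sum.cong refl abs_set_integral_eq_if_same_sign g(1)) (auto intro: real_interval_borel_measurable)
  also have "\<dots> = L1_norm g"
    unfolding sum_set_integral_abs_eq[OF g(1) F(1)] F(2) L1_norm_def by (simp add: set_lebesgue_integral_def)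
  finally have "L1_norm g \<in> (\<lambda>F. \<Sum>I\<in>F. \<bar>LINT x:I|lborel. g x\<bar>) ` interval_families K"
    using F(1) by (metis image_eqI)
  then show ?thesis
    unfolding AK_norm_def using sum_abs_set_integral_le_L1_norm[OF g(1)] by (intro cSup_eq_maximum) auto
qed

lemma AK_norm_eq_L1_norm_zero: "AK_norm K (\<lambda>x. 0) = L1_norm (\<lambda>x. 0)"
proof (cases "K = 0")
  case True
  then have "interval_families K \<noteq> {}"
    by (auto simp: interval_families_def)
  then show ?thesis
    unfolding AK_norm_def L1_norm_def by simp
next
  case False
  then show ?thesis
    by (intro AK_norm_eq_L1_norm_if_zeros_bounded[where r = 0]) (auto simp: zeros_bounded_def)
qed

theorem corollary10:
  fixes k K :: nat and \<theta>1 \<theta>2 :: param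
  assumes "\<theta>1 \<in> Theta k" and "\<theta>2 \<in> Theta k" and "K \<ge> 4 * k"
  shows "AK_norm K (\<lambda>x. mixture k \<theta>1 x - mixture k \<theta>2 x)
       = L1_norm (\<lambda>x. mixture k \<theta>1 x - mixture k \<theta>2 x)"
proof (cases "k = 0")
  case True
  then have "(\<lambda>x. mixture k \<theta>1 x - mixture k \<theta>2 x) = (\<lambda>x. 0)"
    by (simp add: mixture_def)
  then show ?thesis
    using AK_norm_eq_L1_norm_zero by simp
next
  case False
  show ?thesis
  proof (rule AK_norm_eq_L1_norm_if_zeros_bounded)
    show "integrable lborel (\<lambda>x. mixture k \<theta>1 x - mixture k \<theta>2 x)"
      using assms(1,2) by (intro Bochner_Integration.integrable_diff integrable_mixture)
    show "continuous_on UNIV (\<lambda>x. mixture k \<theta>1 x - mixture k \<theta>2 x)"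
      using continuous_on_mixture by (intro continuous_intros)
    show "zeros_bounded (\<lambda>x. mixture k \<theta>1 x - mixture k \<theta>2 x) (4 * k - 2)"
      using zeros_bounded_mixture_diff[OF assms(1,2)] .
    show "4 * k - 2 < K"
      using False assms(3) by simp
  qed
qed

end
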